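(* Let $\varepsilon>0$, let $u,v\in C(\bar\Omega)$ and $f,\tilde f:\Omega_\varepsilon\to\mathbb{R}$ satisfy, at every point of $\Omega_\varepsilon$, $$a^-_\varepsilon(\beta)S^-_\varepsilon u-a^+_\varepsilon(\beta)S^+_\varepsilon u\le f\le\tilde f\le a^-_\varepsilon(\beta)S^-_\varepsilon v-a^+_\varepsilon(\beta)S^+_\varepsilon v.$$ Suppose in addition that (i) $f<\tilde f$ on $\Omega_\varepsilon$, or (ii) $f\le0$ on $\Omega_\varepsilon$, or (iii) $\tilde f\ge0$ on $\Omega_\varepsilon$. Then $$\max_{\bar\Omega}(u-v)=\max_{\bar\Omega\setminus\Omega_\varepsilon}(u-v).$$
   Context: Setting: $\Omega\subseteq\mathbb{R}^n$ is a bounded open connected set with $C^1$ boundary, $\Gamma_D\subseteq\partial\Omega$ is a nonempty closed subset (the Dirichlet part of the boundary), $\beta\in\mathbb{R}$. Notation: $\Omega_\varepsilon:=\{x\in\bar\Omega:\operatorname{dist}(x,\Gamma_D)>\varepsilon\}$; for a function $w$ and $x\in\Omega_\varepsilon$, $w^\varepsilon(x):=\max_{\bar B(x,\varepsilon)\cap\bar\Omega}w$, $w_\varepsilon(x):=\min_{\bar B(x,\varepsilon)\cap\bar\Omega}w$, $S^+_\varepsilon w(x):=\frac1\varepsilon(w^\varepsilon(x)-w(x))$, $S^-_\varepsilon w(x):=\frac1\varepsilon(w(x)-w_\varepsilon(x))$. Coefficients: for $\beta\ne0$, $a^+_\varepsilon(\beta):=\frac{\beta}{e^{\varepsilon\beta}-1}$,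 $a^-_\varepsilon(\beta):=\frac{\beta}{1-e^{-\varepsilon\beta}}$; $a^\pm_\varepsilon(0):=1/\varepsilon$. *)

theory Defs
  imports "HOL-Analysis.Analysis"
begin

definition C1_boundary :: "'a::euclidean_space set \<Rightarrow> bool" where
  "C1_boundary \<Omega> \<longleftrightarrow>
     (\<forall>p\<in>frontier \<Omega>. \<exists>U \<phi> g. open U \<and> p \<in> U \<and>
        (\<forall>x\<in>U. (\<phi> has_derivative (\<lambda>h. g x \<bullet> h)) (at x)) \<and>
        continuous_on U g \<and> (\<forall>x\<in>U. g x \<noteq> 0) \<and>
        \<Omega> \<inter> U = {x\<in>U. \<phi> x < (0::real)})"

definition Omega_eps :: "'a::euclidean_space set \<Rightarrow> 'a set \<Rightarrow> real \<Rightarrow> 'a set" where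
  "Omega_eps \<Omega> \<Gamma>D \<epsilon> = {x \<in> closure \<Omega>. infdist x \<Gamma>D > \<epsilon>}"

definition upper_env :: "'a::euclidean_space set \<Rightarrow> real \<Rightarrow> ('a \<Rightarrow> real) \<Rightarrow> 'a \<Rightarrow> real" where
  "upper_env \<Omega> \<epsilon> w x = (SUP y\<in>cball x \<epsilon> \<inter> closure \<Omega>. w y)"

definition lower_env :: "'a::euclidean_space set \<Rightarrow> real \<Rightarrow> ('a \<Rightarrow> real) \<Rightarrow> 'a \<Rightarrow> real" where
  "lower_env \<Omega> \<epsilon> w x = (INF y\<in>cball x \<epsilon> \<inter> closure \<Omega>. w y)"

definition S_plus :: "'a::euclidean_space set \<Rightarrow> real \<Rightarrow> ('a \<Rightarrow> real) \<Rightarrow> 'a \<Rightarrow> real" where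
  "S_plus \<Omega> \<epsilon> w x = (upper_env \<Omega> \<epsilon> w x - w x) / \<epsilon>"

definition S_minus :: "'a::euclidean_space set \<Rightarrow> real \<Rightarrow> ('a \<Rightarrow> real) \<Rightarrow> 'a \<Rightarrow> real" where
  "S_minus \<Omega> \<epsilon> w x = (w x - lower_env \<Omega> \<epsilon> w x) / \<epsilon>"

definition a_plus :: "real \<Rightarrow> real \<Rightarrow> real" where
  "a_plus \<epsilon> \<beta> = (if \<beta> = 0 then 1 / \<epsilon> else \<beta> / (exp (\<epsilon> * \<beta>) - 1))"

definition a_minus :: "real \<Rightarrow> real \<Rightarrow> real" where
  "a_minus \<epsilon> \<beta> = (if \<beta> = 0 then 1 / \<epsilon> else \<beta> / (1 - exp (- (\<epsilon> * \<beta>))))"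

end

theory Submission
  imports Defs
begin

text \<open>Let \<open>w = u - v\<close> attain its maximum \<open>M\<close> over the closure of \<open>\<Omega>\<close>, and suppose every
  maximum point lies in \<open>\<Omega>\<^sub>\<epsilon>\<close>. At a maximum point \<open>S\<^sup>+u \<le> S\<^sup>+v\<close> and \<open>S\<^sup>-v \<le> S\<^sup>-u\<close>; since
  the weights are positive, the chain of hypotheses then forces \<open>S\<^sup>\<plusminus>u = S\<^sup>\<plusminus>v\<close> and \<open>f = f'\<close>,
  which excludes case (i). In case (ii), let \<open>E'\<close> be the set of maximum points of \<open>u\<close> on
  \<open>{w = M}\<close>. At \<open>x \<in> E'\<close> the maximiser of \<open>u\<close> on the \<open>\<epsilon>\<close>-ball again lies in \<open>{w = M}\<close>, so
  \<open>S\<^sup>+u = 0\<close>, then \<open>S\<^sup>-u = 0\<close> because \<open>f \<le> 0\<close>, hence \<open>u\<close> and \<open>v\<close> are constant on the ball.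
  Thus \<open>E'\<close> is closed and relatively open, so it is the whole connected closure of \<open>\<Omega>\<close>,
  contradicting \<open>\<Gamma>\<^sub>D \<noteq> {}\<close>. Case (iii) is case (ii) for \<open>-v, -u\<close>, since negation swaps
  \<open>S\<^sup>+\<close> and \<open>S\<^sup>-\<close>.\<close>

text \<open>The operator \<open>a\<^sup>-\<^sub>\<epsilon>(\<beta>) S\<^sup>-\<^sub>\<epsilon> - a\<^sup>+\<^sub>\<epsilon>(\<beta>) S\<^sup>+\<^sub>\<epsilon>\<close> with the weights abstracted to \<open>A\<close>, \<open>B\<close>:
  only their positivity matters.\<close>
definition scheme_op ::
    "'a::euclidean_space set \<Rightarrow> real \<Rightarrow> real \<Rightarrow> real \<Rightarrow> ('a \<Rightarrow> real) \<Rightarrow> 'a \<Rightarrow> real" where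
  "scheme_op \<Omega> \<epsilon> A B w x = A * S_minus \<Omega> \<epsilon> w x - B * S_plus \<Omega> \<epsilon> w x"

lemma upper_env_attained:
  fixes \<Omega> :: "'a::euclidean_space set"
  assumes "compact (closure \<Omega>)" "continuous_on (closure \<Omega>) w" "x \<in> closure \<Omega>" "\<epsilon> \<ge> 0"
  obtains z where "z \<in> cball x \<epsilon> \<inter> closure \<Omega>" "upper_env \<Omega> \<epsilon> w x = w z"
    "\<And>y. y \<in> cball x \<epsilon> \<inter> closure \<Omega> \<Longrightarrow> w y \<le> w z"
proof -
  have "x \<in> cball x \<epsilon> \<inter> closure \<Omega>" using assms by simp
  then obtain z where z: "z \<in> cball x \<epsilon> \<inter> closure \<Omega>" "\<forall>y\<in>cball x \<epsilon> \<inter> closure \<Omega>. w y \<le> w z"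
    using continuous_attains_sup[OF compact_Int_closed[OF compact_cball closed_closure] _
        continuous_on_subset[OF assms(2)]] by blast
  moreover have "upper_env \<Omega> \<epsilon> w x = w z"
    unfolding upper_env_def by (rule cSup_eq_maximum) (use z in auto)
  ultimately show thesis using that by blast
qed

lemma lower_env_attained:
  fixes \<Omega> :: "'a::euclidean_space set"
  assumes "compact (closure \<Omega>)" "continuous_on (closure \<Omega>) w" "x \<in> closure \<Omega>" "\<epsilon> \<ge> 0"
  obtains z where "z \<in> cball x \<epsilon> \<inter> closure \<Omega>" "lower_env \<Omega> \<epsilon> w x = w z"
    "\<And>y. y \<in> cball x \<epsilon> \<inter> closure \<Omega> \<Longrightarrow> w z \<le> w y"
proof -
  have "x \<in> cball x \<epsilon> \<inter> closure \<Omega>" using assms by simp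
  then obtain z where z: "z \<in> cball x \<epsilon> \<inter> closure \<Omega>" "\<forall>y\<in>cball x \<epsilon> \<inter> closure \<Omega>. w z \<le> w y"
    using continuous_attains_inf[OF compact_Int_closed[OF compact_cball closed_closure] _
        continuous_on_subset[OF assms(2)]] by blast
  moreover have "lower_env \<Omega> \<epsilon> w x = w z"
    unfolding lower_env_def by (rule cInf_eq_minimum) (use z in auto)
  ultimately show thesis using that by blast
qed

lemma upper_env_uminus: "upper_env \<Omega> \<epsilon> (\<lambda>y. - w y) x = - lower_env \<Omega> \<epsilon> w x"
  by (simp add: upper_env_def lower_env_def Inf_real_def image_image)

lemma lower_env_uminus: "lower_env \<Omega> \<epsilon> (\<lambda>y. - w y) x = - upper_env \<Omega> \<epsilon> w x"
  by (simp add: upper_env_def lower_env_def Inf_real_def image_image)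

lemma S_plus_uminus: "S_plus \<Omega> \<epsilon> (\<lambda>y. - w y) x = S_minus \<Omega> \<epsilon> w x"
  by (simp add: S_plus_def S_minus_def upper_env_uminus)

lemma S_minus_uminus: "S_minus \<Omega> \<epsilon> (\<lambda>y. - w y) x = S_plus \<Omega> \<epsilon> w x"
  by (simp add: S_plus_def S_minus_def lower_env_uminus)

lemma scheme_op_uminus:
  "scheme_op \<Omega> \<epsilon> A B (\<lambda>y. - w y) x = - scheme_op \<Omega> \<epsilon> B A w x"
  by (simp add: scheme_op_def S_plus_uminus S_minus_uminus)

lemma S_plus_nonneg:
  assumes "compact (closure \<Omega>)" "continuous_on (closure \<Omega>) w" "x \<in> closure \<Omega>" "\<epsilon> > 0"
  shows "S_plus \<Omega> \<epsilon> w x \<ge> 0"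
proof -
  obtain z where "upper_env \<Omega> \<epsilon> w x = w z" "w x \<le> w z"
    using upper_env_attained[OF assms(1-3)] assms(3,4) by (metis IntI centre_in_cball less_imp_le)
  then show ?thesis using assms(4) by (simp add: S_plus_def)
qed

lemma S_minus_nonneg:
  assumes "compact (closure \<Omega>)" "continuous_on (closure \<Omega>) w" "x \<in> closure \<Omega>" "\<epsilon> > 0"
  shows "S_minus \<Omega> \<epsilon> w x \<ge> 0"
proof -
  obtain z where "lower_env \<Omega> \<epsilon> w x = w z" "w z \<le> w x"
    using lower_env_attained[OF assms(1-3)] assms(3,4) by (metis IntI centre_in_cball less_imp_le)
  then show ?thesis using assms(4) by (simp add: S_minus_def)
qed

lemma constant_on_cball_if_S_zero:
  assumes "compact (closure \<Omega>)" "continuous_on (closure \<Omega>) w" "x \<in> closure \<Omega>" "\<epsilon> > 0"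
    and "S_plus \<Omega> \<epsilon> w x = 0" "S_minus \<Omega> \<epsilon> w x = 0" "y \<in> cball x \<epsilon> \<inter> closure \<Omega>"
  shows "w y = w x"
proof -
  have "\<epsilon> \<ge> 0" using assms(4) by simp
  obtain z where "upper_env \<Omega> \<epsilon> w x = w z" "w y \<le> w z"
    using upper_env_attained[OF assms(1-3) \<open>\<epsilon> \<ge> 0\<close>] assms(7) by metis
  moreover obtain z' where "lower_env \<Omega> \<epsilon> w x = w z'" "w z' \<le> w y"
    using lower_env_attained[OF assms(1-3) \<open>\<epsilon> \<ge> 0\<close>] assms(7) by metis
  ultimately show ?thesis using assms(4-6) by (simp add: S_plus_def S_minus_def)
qed

lemma S_le_at_max_of_diff:
  assumes "compact (closure \<Omega>)" "continuous_on (closure \<Omega>) u" "continuous_on (closure \<Omega>) v"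
    and "x \<in> closure \<Omega>" "\<epsilon> > 0"
    and max: "\<And>y. y \<in> closure \<Omega> \<Longrightarrow> u y - v y \<le> u x - v x"
  shows "S_plus \<Omega> \<epsilon> u x \<le> S_plus \<Omega> \<epsilon> v x" "S_minus \<Omega> \<epsilon> v x \<le> S_minus \<Omega> \<epsilon> u x"
proof -
  have "\<epsilon> \<ge> 0" using assms(5) by simp
  obtain z where z: "z \<in> cball x \<epsilon> \<inter> closure \<Omega>" "upper_env \<Omega> \<epsilon> u x = u z"
    using upper_env_attained[OF assms(1,2,4) \<open>\<epsilon> \<ge> 0\<close>] by metis
  have "v z \<le> upper_env \<Omega> \<epsilon> v x"
    using upper_env_attained[OF assms(1,3,4) \<open>\<epsilon> \<ge> 0\<close>] z(1) by metis
  then have "upper_env \<Omega> \<epsilon> u x - u x \<le> upper_env \<Omega> \<epsilon> v x - v x"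
    using z max[of z] by simp
  then show "S_plus \<Omega> \<epsilon> u x \<le> S_plus \<Omega> \<epsilon> v x"
    unfolding S_plus_def using assms(5) by (simp add: divide_right_mono)
  obtain y where y: "y \<in> cball x \<epsilon> \<inter> closure \<Omega>" "lower_env \<Omega> \<epsilon> v x = v y"
    using lower_env_attained[OF assms(1,3,4) \<open>\<epsilon> \<ge> 0\<close>] by metis
  have "lower_env \<Omega> \<epsilon> u x \<le> u y"
    using lower_env_attained[OF assms(1,2,4) \<open>\<epsilon> \<ge> 0\<close>] y(1) by metis
  then have "v x - lower_env \<Omega> \<epsilon> v x \<le> u x - lower_env \<Omega> \<epsilon> u x"
    using y max[of y] by simp
  then show "S_minus \<Omega> \<epsilon> v x \<le> S_minus \<Omega> \<epsilon> u x"
    unfolding S_minus_def using assms(5) by (simp add: divide_right_mono)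
qed

lemma a_plus_pos: "\<epsilon> > 0 \<Longrightarrow> a_plus \<epsilon> \<beta> > 0"
  by (auto simp: a_plus_def zero_less_divide_iff zero_less_mult_iff mult_less_0_iff
      linorder_neq_iff)

lemma a_minus_pos: "\<epsilon> > 0 \<Longrightarrow> a_minus \<epsilon> \<beta> > 0"
  by (auto simp: a_minus_def zero_less_divide_iff zero_less_mult_iff mult_less_0_iff
      linorder_neq_iff)

lemma S_eq_at_max_of_diff:
  assumes "compact (closure \<Omega>)" "continuous_on (closure \<Omega>) u" "continuous_on (closure \<Omega>) v"
    and "x \<in> closure \<Omega>" "\<epsilon> > 0" "A > 0" "B > 0"
    and max: "\<And>y. y \<in> closure \<Omega> \<Longrightarrow> u y - v y \<le> u x - v x"
    and "scheme_op \<Omega> \<epsilon> A B u x \<le> scheme_op \<Omega> \<epsilon> A B v x"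
  shows "S_plus \<Omega> \<epsilon> u x = S_plus \<Omega> \<epsilon> v x" "S_minus \<Omega> \<epsilon> u x = S_minus \<Omega> \<epsilon> v x"
proof -
  note le = S_le_at_max_of_diff[OF assms(1-5) max]
  have "A * (S_minus \<Omega> \<epsilon> u x - S_minus \<Omega> \<epsilon> v x) + B * (S_plus \<Omega> \<epsilon> v x - S_plus \<Omega> \<epsilon> u x) \<le> 0"
    using assms(9) by (simp add: scheme_op_def algebra_simps)
  moreover have "A * (S_minus \<Omega> \<epsilon> u x - S_minus \<Omega> \<epsilon> v x) \<ge> 0"
    "B * (S_plus \<Omega> \<epsilon> v x - S_plus \<Omega> \<epsilon> u x) \<ge> 0"
    using le assms(6,7) by simp_all
  ultimately have "A * (S_minus \<Omega> \<epsilon> u x - S_minus \<Omega> \<epsilon> v x) = 0"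
    "B * (S_plus \<Omega> \<epsilon> v x - S_plus \<Omega> \<epsilon> u x) = 0"
    by linarith+
  then show "S_plus \<Omega> \<epsilon> u x = S_plus \<Omega> \<epsilon> v x" "S_minus \<Omega> \<epsilon> u x = S_minus \<Omega> \<epsilon> v x"
    using assms(6,7) by simp_all
qed

lemma connected_eq_if_cball_closed:
  fixes K E :: "'a::metric_space set"
  assumes "connected K" "E \<subseteq> K" "closed E" "E \<noteq> {}" "\<epsilon> > 0"
    and "\<And>x y. x \<in> E \<Longrightarrow> y \<in> cball x \<epsilon> \<inter> K \<Longrightarrow> y \<in> E"
  shows "E = K"
proof -
  have "openin (top_of_set K) E"
    unfolding openin_euclidean_subtopology_iff
    using assms(2,5,6) by (auto simp: dist_commute intro!: exI[of _ \<epsilon>])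
  moreover have "closedin (top_of_set K) E"
    using assms(2,3) by (simp add: closed_subset)
  ultimately show ?thesis
    using assms(1,4) unfolding connected_clopen by blast
qed

lemma source_eq_at_max_of_diff:
  assumes "compact (closure \<Omega>)" "continuous_on (closure \<Omega>) u" "continuous_on (closure \<Omega>) v"
    and "x \<in> closure \<Omega>" "\<epsilon> > 0" "A > 0" "B > 0"
    and max: "\<And>y. y \<in> closure \<Omega> \<Longrightarrow> u y - v y \<le> u x - v x"
    and "scheme_op \<Omega> \<epsilon> A B u x \<le> f" "f \<le> f'" "f' \<le> scheme_op \<Omega> \<epsilon> A B v x"
  shows "f = f'"
proof -
  have "scheme_op \<Omega> \<epsilon> A B u x \<le> scheme_op \<Omega> \<epsilon> A B v x" using assms(9-11) by linarith
  from S_eq_at_max_of_diff[OF assms(1-7) max this]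
  have "scheme_op \<Omega> \<epsilon> A B u x = scheme_op \<Omega> \<epsilon> A B v x" by (simp add: scheme_op_def)
  then show ?thesis using assms(9-11) by linarith
qed

lemma constant_on_cball_at_max:
  assumes "compact (closure \<Omega>)" "continuous_on (closure \<Omega>) u" "continuous_on (closure \<Omega>) v"
    and "x \<in> closure \<Omega>" "\<epsilon> > 0" "A > 0" "B > 0"
    and max: "\<And>y. y \<in> closure \<Omega> \<Longrightarrow> u y - v y \<le> u x - v x"
    and max_u: "\<And>y. y \<in> closure \<Omega> \<Longrightarrow> u y - v y = u x - v x \<Longrightarrow> u y \<le> u x"
    and "scheme_op \<Omega> \<epsilon> A B u x \<le> scheme_op \<Omega> \<epsilon> A B v x"
    and "scheme_op \<Omega> \<epsilon> A B u x \<le> 0"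
    and y: "y \<in> cball x \<epsilon> \<inter> closure \<Omega>"
  shows "u y = u x" "v y = v x"
proof -
  note S_eq = S_eq_at_max_of_diff[OF assms(1-7) max assms(10)]
  have "\<epsilon> \<ge> 0" using assms(5) by simp
  obtain z where z: "z \<in> cball x \<epsilon> \<inter> closure \<Omega>" "upper_env \<Omega> \<epsilon> u x = u z"
    using upper_env_attained[OF assms(1,2,4) \<open>\<epsilon> \<ge> 0\<close>] by metis
  have "v z \<le> upper_env \<Omega> \<epsilon> v x"
    using upper_env_attained[OF assms(1,3,4) \<open>\<epsilon> \<ge> 0\<close>] z(1) by metis
  moreover have "upper_env \<Omega> \<epsilon> u x - u x = upper_env \<Omega> \<epsilon> v x - v x"
    using S_eq(1) assms(5) by (simp add: S_plus_def)
  ultimately have "u z - v z \<ge> u x - v x" using z(2) by simp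
  then have "u z \<le> u x" using max[of z] max_u[of z] z(1) by simp
  then have "S_plus \<Omega> \<epsilon> u x \<le> 0" using z(2) assms(5) by (simp add: S_plus_def divide_nonpos_pos)
  then have Su_plus: "S_plus \<Omega> \<epsilon> u x = 0" using S_plus_nonneg[OF assms(1,2,4,5)] by simp
  have "A * S_minus \<Omega> \<epsilon> u x \<le> 0" using assms(11) Su_plus by (simp add: scheme_op_def)
  then have Su_minus: "S_minus \<Omega> \<epsilon> u x = 0"
    using S_minus_nonneg[OF assms(1,2,4,5)] assms(6) by (simp add: mult_le_0_iff)
  show "u y = u x" by (rule constant_on_cball_if_S_zero[OF assms(1,2,4,5) Su_plus Su_minus y])
  show "v y = v x"
    using constant_on_cball_if_S_zero[OF assms(1,3,4,5) _ _ y] S_eq Su_plus Su_minus by simp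
qed

lemma max_of_diff_attained_outside_nonpos:
  fixes \<Omega> D :: "'a::euclidean_space set" and u v f f' :: "'a \<Rightarrow> real"
  assumes "compact (closure \<Omega>)" "connected (closure \<Omega>)" "closure \<Omega> - D \<noteq> {}"
    and "continuous_on (closure \<Omega>) u" "continuous_on (closure \<Omega>) v"
    and "\<epsilon> > 0" "A > 0" "B > 0"
    and sub: "\<And>x. x \<in> D \<Longrightarrow> scheme_op \<Omega> \<epsilon> A B u x \<le> f x"
    and ff: "\<And>x. x \<in> D \<Longrightarrow> f x \<le> f' x"
    and super: "\<And>x. x \<in> D \<Longrightarrow> f' x \<le> scheme_op \<Omega> \<epsilon> A B v x"
    and cases: "(\<forall>x\<in>D. f x < f' x) \<or> (\<forall>x\<in>D. f x \<le> 0)"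
    and "x\<^sub>0 \<in> closure \<Omega>" "\<And>y. y \<in> closure \<Omega> \<Longrightarrow> u y - v y \<le> u x\<^sub>0 - v x\<^sub>0"
  shows "\<exists>b\<in>closure \<Omega> - D. u b - v b = u x\<^sub>0 - v x\<^sub>0"
proof (rule ccontr)
  define E where "E = {y \<in> closure \<Omega>. u y - v y = u x\<^sub>0 - v x\<^sub>0}"
  assume "\<not> ?thesis"
  then have E_sub: "E \<subseteq> D" by (auto simp: E_def)
  have "x\<^sub>0 \<in> E" using assms(13) by (simp add: E_def)
  have max: "\<And>x y. x \<in> E \<Longrightarrow> y \<in> closure \<Omega> \<Longrightarrow> u y - v y \<le> u x - v x"
    using assms(14) by (auto simp: E_def)
  have scheme_le: "scheme_op \<Omega> \<epsilon> A B u x \<le> scheme_op \<Omega> \<epsilon> A B v x" if "x \<in> E" for x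
    using sub ff super E_sub that by (meson order_trans subsetD)
  from cases show False
  proof
    assume "\<forall>x\<in>D. f x < f' x"
    moreover have "x\<^sub>0 \<in> D" using \<open>x\<^sub>0 \<in> E\<close> E_sub by blast
    moreover have "f x\<^sub>0 = f' x\<^sub>0"
      using source_eq_at_max_of_diff[OF assms(1,4,5,13,6-8) max[OF \<open>x\<^sub>0 \<in> E\<close>]]
        sub ff super \<open>x\<^sub>0 \<in> D\<close> by blast
    ultimately show False by force
  next
    assume f_nonpos: "\<forall>x\<in>D. f x \<le> 0"
    have "E \<subseteq> closure \<Omega>" by (auto simp: E_def)
    have "closed E"
      unfolding E_def using assms(4,5) by (intro continuous_closed_preimage_constant continuous_intros) auto
    then have "compact E" using assms(1) \<open>E \<subseteq> closure \<Omega>\<close> by (metis compact_Int_closed inf.absorb2)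
    then obtain x\<^sub>1 where x\<^sub>1: "x\<^sub>1 \<in> E" "\<And>y. y \<in> E \<Longrightarrow> u y \<le> u x\<^sub>1"
      using continuous_attains_sup[of E u] continuous_on_subset[OF assms(4) \<open>E \<subseteq> closure \<Omega>\<close>]
        \<open>x\<^sub>0 \<in> E\<close> by blast
    define E' where "E' = {y \<in> E. u y = u x\<^sub>1}"
    have "E' = closure \<Omega>"
    proof (rule connected_eq_if_cball_closed[OF assms(2) _ _ _ assms(6)])
      show "E' \<subseteq> closure \<Omega>" "E' \<noteq> {}" using x\<^sub>1(1) by (auto simp: E'_def E_def)
      show "closed E'"
        unfolding E'_def using \<open>closed E\<close> continuous_on_subset[OF assms(4) \<open>E \<subseteq> closure \<Omega>\<close>]
        by (rule continuous_closed_preimage_constant[rotated])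
    next
      fix x y assume x: "x \<in> E'" and y: "y \<in> cball x \<epsilon> \<inter> closure \<Omega>"
      have "x \<in> E" "x \<in> closure \<Omega>" "u x = u x\<^sub>1" using x by (auto simp: E'_def E_def)
      have max_u: "u z \<le> u x" if "z \<in> closure \<Omega>" "u z - v z = u x - v x" for z
        using that x\<^sub>1(2)[of z] \<open>x \<in> E\<close> \<open>u x = u x\<^sub>1\<close> by (simp add: E_def)
      have "scheme_op \<Omega> \<epsilon> A B u x \<le> 0"
        using sub f_nonpos E_sub \<open>x \<in> E\<close> by force
      note constant_on_cball_at_max[OF assms(1,4,5) \<open>x \<in> closure \<Omega>\<close> assms(6-8)
          max[OF \<open>x \<in> E\<close>] max_u scheme_le[OF \<open>x \<in> E\<close>] this y]
      then show "y \<in> E'" using \<open>x \<in> E\<close> \<open>u x = u x\<^sub>1\<close> y by (simp add: E'_def E_def)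
    qed
    moreover have "E' \<subseteq> D" using E_sub by (auto simp: E'_def)
    ultimately show False using assms(3) by blast
  qed
qed

lemma max_of_diff_attained_outside:
  fixes \<Omega> D :: "'a::euclidean_space set" and u v f f' :: "'a \<Rightarrow> real"
  assumes "compact (closure \<Omega>)" "connected (closure \<Omega>)" "closure \<Omega> - D \<noteq> {}"
    and "continuous_on (closure \<Omega>) u" "continuous_on (closure \<Omega>) v"
    and "\<epsilon> > 0" "A > 0" "B > 0"
    and sub: "\<And>x. x \<in> D \<Longrightarrow> scheme_op \<Omega> \<epsilon> A B u x \<le> f x"
    and ff: "\<And>x. x \<in> D \<Longrightarrow> f x \<le> f' x"
    and super: "\<And>x. x \<in> D \<Longrightarrow> f' x \<le> scheme_op \<Omega> \<epsilon> A B v x"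
    and cases: "(\<forall>x\<in>D. f x < f' x) \<or> (\<forall>x\<in>D. f x \<le> 0) \<or> (\<forall>x\<in>D. f' x \<ge> 0)"
    and max: "x\<^sub>0 \<in> closure \<Omega>" "\<And>y. y \<in> closure \<Omega> \<Longrightarrow> u y - v y \<le> u x\<^sub>0 - v x\<^sub>0"
  shows "\<exists>b\<in>closure \<Omega> - D. u b - v b = u x\<^sub>0 - v x\<^sub>0"
proof (cases "\<forall>x\<in>D. f' x \<ge> 0")
  case True
  have "scheme_op \<Omega> \<epsilon> B A (\<lambda>y. - v y) x \<le> - f' x" "- f x \<le> scheme_op \<Omega> \<epsilon> B A (\<lambda>y. - u y) x"
    if "x \<in> D" for x
    using sub[OF that] super[OF that] by (simp_all add: scheme_op_uminus)
  then have "\<exists>b\<in>closure \<Omega> - D. - v b - - u b = - v x\<^sub>0 - - u x\<^sub>0"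
    using ff True max assms(4,5)
    by (intro max_of_diff_attained_outside_nonpos[OF assms(1-3) _ _ assms(6,8,7),
          where f = "\<lambda>x. - f' x" and f' = "\<lambda>x. - f x"])
      (auto intro!: continuous_intros)
  then show ?thesis by simp
next
  case False
  then show ?thesis
    using max_of_diff_attained_outside_nonpos[OF assms(1-11) _ max] cases by blast
qed

lemma SUP_eq_SUP_subset_if_max_attained:
  fixes g :: "'a \<Rightarrow> real"
  assumes "x\<^sub>0 \<in> K" "\<And>y. y \<in> K \<Longrightarrow> g y \<le> g x\<^sub>0" "S \<subseteq> K" "b \<in> S" "g b = g x\<^sub>0"
  shows "(SUP x\<in>K. g x) = (SUP x\<in>S. g x)"
proof -
  have "(SUP x\<in>K. g x) = g x\<^sub>0" by (rule cSup_eq_maximum) (use assms(1,2) in auto)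
  moreover have "(SUP x\<in>S. g x) = g x\<^sub>0"
    by (rule cSup_eq_maximum) (use assms(2-5) in \<open>auto intro: rev_image_eqI\<close>)
  ultimately show ?thesis by simp
qed

theorem lemma4p2:
  fixes \<Omega> \<Gamma>D :: "'a::euclidean_space set"
    and \<beta> \<epsilon> :: real and u v f f' :: "'a \<Rightarrow> real"
  assumes "bounded \<Omega>" "open \<Omega>" "connected \<Omega>" "C1_boundary \<Omega>"
    and "\<Gamma>D \<subseteq> frontier \<Omega>" "closed \<Gamma>D" "\<Gamma>D \<noteq> {}"
    and "\<epsilon> > 0"
    and "continuous_on (closure \<Omega>) u" "continuous_on (closure \<Omega>) v"
    and sub: "\<And>x. x \<in> Omega_eps \<Omega> \<Gamma>D \<epsilon> \<Longrightarrow>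
         a_minus \<epsilon> \<beta> * S_minus \<Omega> \<epsilon> u x - a_plus \<epsilon> \<beta> * S_plus \<Omega> \<epsilon> u x \<le> f x"
    and ff: "\<And>x. x \<in> Omega_eps \<Omega> \<Gamma>D \<epsilon> \<Longrightarrow> f x \<le> f' x"
    and super: "\<And>x. x \<in> Omega_eps \<Omega> \<Gamma>D \<epsilon> \<Longrightarrow>
         f' x \<le> a_minus \<epsilon> \<beta> * S_minus \<Omega> \<epsilon> v x - a_plus \<epsilon> \<beta> * S_plus \<Omega> \<epsilon> v x"
    and cases: "(\<forall>x\<in>Omega_eps \<Omega> \<Gamma>D \<epsilon>. f x < f' x) \<or>
                (\<forall>x\<in>Omega_eps \<Omega> \<Gamma>D \<epsilon>. f x \<le> 0) \<or>
                (\<forall>x\<in>Omega_eps \<Omega> \<Gamma>D \<epsilon>. f' x \<ge> 0)"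
  shows "(SUP x\<in>closure \<Omega>. u x - v x) = (SUP x\<in>closure \<Omega> - Omega_eps \<Omega> \<Gamma>D \<epsilon>. u x - v x)"
proof -
  let ?D = "Omega_eps \<Omega> \<Gamma>D \<epsilon>"
  have compact: "compact (closure \<Omega>)" using assms(1) by (simp add: compact_closure)
  have connected: "connected (closure \<Omega>)" using assms(3) by (rule connected_imp_connected_closure)
  have "\<Gamma>D \<subseteq> closure \<Omega> - ?D"
    using assms(5,8) by (auto simp: frontier_def Omega_eps_def infdist_zero)
  then have boundary_layer: "closure \<Omega> - ?D \<noteq> {}" using assms(7) by blast
  then have "closure \<Omega> \<noteq> {}" by auto
  then obtain x\<^sub>0 where x\<^sub>0: "x\<^sub>0 \<in> closure \<Omega>" "\<And>y. y \<in> closure \<Omega> \<Longrightarrow> u y - v y \<le> u x\<^sub>0 - v x\<^sub>0"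
    using continuous_attains_sup[OF compact _ continuous_on_diff[OF assms(9,10)]] by blast
  have "\<exists>b\<in>closure \<Omega> - ?D. u b - v b = u x\<^sub>0 - v x\<^sub>0"
    using sub super assms(8)
    by (intro max_of_diff_attained_outside[OF compact connected boundary_layer assms(9,10,8)
          _ _ _ ff _ cases x\<^sub>0, where A = "a_minus \<epsilon> \<beta>" and B = "a_plus \<epsilon> \<beta>"])
      (simp_all add: scheme_op_def a_minus_pos a_plus_pos)
  then obtain b where "b \<in> closure \<Omega> - ?D" "u b - v b = u x\<^sub>0 - v x\<^sub>0" by blast
  then show ?thesis
    using x\<^sub>0 by (intro SUP_eq_SUP_subset_if_max_attained[where g = "\<lambda>x. u x - v x"]) auto
qed

end
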